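(* Let $X$ be a topological space possessing an infinite metrizable gauge, let $\kappa$ be a regular cardinal with $\kappa\in\mathrm{MG}(X)$, let $G\in\mathcal{G}_\kappa$ and $d\in\mathrm{Met}(X;G)$. Then $\lambda_G\circ d\in\mathrm{Ult}(X;\mathrm{Arc}(G)^\perp)$, and $d$ and $\lambda_G\circ d$ are uniformly equivalent to each other.
   Context: A linearly ordered Abelian group is an Abelian group with a linear order compatible with addition. For $x,y\in G_{>0}$, $x\asymp y$ iff $y\le nx$ and $x\le my$ for some $n,m\in\mathbb{Z}_{\ge1}$; $\mathrm{Arc}(G)=G_{>0}/\asymp$, ordered by $[x]\preceq[y]$ iff ($nx<y$ for all $n$) or $x\asymp y$; $\mathrm{Arc}(G)^\perp$ is $\mathrm{Arc}(G)$ with a new least element $\perp$ adjoined. $\mathrm{abs}(x)=x$ for $x\ge 0$, $-x$ otherwise; $\lambda_G(x)=[\mathrm{abs}(x)]$ for $x\ne0$, $\lambda_G(0)=\perp$. For a bottomed linearly ordered set $S$ (least element $\perp_S$, $S^*=S\setminus\{\perp_S\}$), $\chi(S)$ is the least cardinal $\kappa>0$ such that some strictly decreasing family $(s_\alpha)_{\alpha<\kappa}$ in $S^*$ has every $t\in S^*$ bounded below by some $s_\alpha$. A $G$-metric: $d\colon X^2\to G$, $d(x,y)=0\iff x=y$, $d\ge0$, symmetric, triangle inequality. An $S$-ultrametric: $d\colon X^2\to S$, $d(x,y)=\perp_S\iff x=y$, symmetric, $d(x,y)\le\max\{d(x,z),d(z,y)\}$. Topologies via open balls of radii in $G_{>0}$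 (resp. $S^*$); $\mathrm{Met}(X;G)$, $\mathrm{Ult}(X;S)$ are those generating the topology of $X$. $\mathrm{MG}(X)$: cardinals $\kappa$ with some $G$, $\chi(\mathrm{Arc}(G)^\perp)=\kappa$, $\mathrm{Met}(X;G)\ne\emptyset$; infinite metrizable gauge: some $\kappa\in\mathrm{MG}(X)$ with $\kappa\ge\omega_0$. $\mathcal{G}_\kappa$: groups with $\chi(\mathrm{Arc}(G)^\perp)=\kappa$. Two such (ultra)metrics $d,e$ on $X$ are uniformly equivalent if for every admissible radius $\epsilon$ for $e$ there is an admissible $\delta$ for $d$ with $d(x,y)<\delta\Rightarrow e(x,y)<\epsilon$, and vice versa. *)

theory Defs
  imports "HOL-Analysis.Analysis"
begin

fun gmul :: "nat \<Rightarrow> 'g::linordered_ab_group_add \<Rightarrow> 'g" where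
  "gmul 0 x = 0"
| "gmul (Suc n) x = x + gmul n x"

definition gabs :: "'g::linordered_ab_group_add \<Rightarrow> 'g" where
  "gabs x = (if 0 \<le> x then x else - x)"

definition arch_eqv :: "'g::linordered_ab_group_add \<Rightarrow> 'g \<Rightarrow> bool" where
  "arch_eqv x y \<longleftrightarrow> 0 < x \<and> 0 < y \<and>
     (\<exists>n\<ge>1. y \<le> gmul n x) \<and> (\<exists>m\<ge>1. x \<le> gmul m y)"

definition arc_class :: "'g::linordered_ab_group_add \<Rightarrow> 'g set" where
  "arc_class x = {y. arch_eqv x y}"

text \<open>Arc(G)^perp: the classes [x] (x > 0) together with a new least element,
  represented by the set {0} (distinct from every class, which consists of
  positive elements).\<close>
definition arc_bot_elem :: "'g::linordered_ab_group_add set" where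
  "arc_bot_elem = {0}"

definition ArcBot :: "'g::linordered_ab_group_add set set" where
  "ArcBot = insert arc_bot_elem {arc_class x | x. 0 < x}"

definition arc_le :: "'g::linordered_ab_group_add set \<Rightarrow> 'g set \<Rightarrow> bool" where
  "arc_le A B \<longleftrightarrow> A = arc_bot_elem \<or>
     (\<exists>x y. 0 < x \<and> 0 < y \<and> A = arc_class x \<and> B = arc_class y \<and>
        ((\<forall>n\<ge>1. gmul n x < y) \<or> arch_eqv x y))"

definition lam :: "'g::linordered_ab_group_add \<Rightarrow> 'g set" where
  "lam x = (if x = 0 then arc_bot_elem else arc_class (gabs x))"

definition strict :: "('b \<Rightarrow> 'b \<Rightarrow> bool) \<Rightarrow> 'b \<Rightarrow> 'b \<Rightarrow> bool" where
  "strict le a b \<longleftrightarrow> le a b \<and> a \<noteq> b"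

definition omax :: "('b \<Rightarrow> 'b \<Rightarrow> bool) \<Rightarrow> 'b \<Rightarrow> 'b \<Rightarrow> 'b" where
  "omax le a b = (if le a b then b else a)"

definition dec_coinitial ::
  "'b set \<Rightarrow> ('b \<Rightarrow> 'b \<Rightarrow> bool) \<Rightarrow> 'b \<Rightarrow> 'k rel \<Rightarrow> ('k \<Rightarrow> 'b) \<Rightarrow> bool" where
  "dec_coinitial S le bt r s \<longleftrightarrow>
     (\<forall>\<alpha>\<in>Field r. s \<alpha> \<in> S - {bt}) \<and>
     (\<forall>\<alpha> \<beta>. (\<alpha>, \<beta>) \<in> r \<and> \<alpha> \<noteq> \<beta> \<longrightarrow> strict le (s \<beta>) (s \<alpha>)) \<and>
     (\<forall>t\<in>S - {bt}. \<exists>\<alpha>\<in>Field r. le (s \<alpha>) t)"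

text \<open>chi(S) = |r|: r is a nonzero cardinal admitting such a family, and no
  nonzero smaller cardinal does (all cardinals below |r| are representable on
  the same type as r).\<close>
definition chi_is ::
  "'b set \<Rightarrow> ('b \<Rightarrow> 'b \<Rightarrow> bool) \<Rightarrow> 'b \<Rightarrow> 'k rel \<Rightarrow> bool" where
  "chi_is S le bt r \<longleftrightarrow>
     Card_order r \<and> Field r \<noteq> {} \<and> (\<exists>s. dec_coinitial S le bt r s) \<and>
     (\<forall>r'::'k rel. Card_order r' \<and> Field r' \<noteq> {} \<and> (r', r) \<in> ordLess \<longrightarrow>
        \<not> (\<exists>s. dec_coinitial S le bt r' s))"

abbreviation chi_arc :: "'g::linordered_ab_group_add itself \<Rightarrow> 'k rel \<Rightarrow> bool" where
  "chi_arc TYPE('g) r \<equiv> chi_is (ArcBot :: 'g set set) arc_le arc_bot_elem r"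

definition generates_topology ::
  "'a topology \<Rightarrow> ('a \<Rightarrow> 'r \<Rightarrow> 'a set) \<Rightarrow> 'r set \<Rightarrow> bool" where
  "generates_topology X B R \<longleftrightarrow>
     (\<forall>U. openin X U \<longleftrightarrow> U \<subseteq> topspace X \<and> (\<forall>x\<in>U. \<exists>r\<in>R. B x r \<subseteq> U))"

definition is_gmetric :: "'a set \<Rightarrow> ('a \<Rightarrow> 'a \<Rightarrow> 'g::linordered_ab_group_add) \<Rightarrow> bool" where
  "is_gmetric M d \<longleftrightarrow>
     (\<forall>x\<in>M. \<forall>y\<in>M. (d x y = 0 \<longleftrightarrow> x = y) \<and> 0 \<le> d x y \<and> d x y = d y x) \<and>
     (\<forall>x\<in>M. \<forall>y\<in>M. \<forall>z\<in>M. d x y \<le> d x z + d z y)"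

definition Met :: "'a topology \<Rightarrow> ('a \<Rightarrow> 'a \<Rightarrow> 'g::linordered_ab_group_add) set" where
  "Met X = {d. is_gmetric (topspace X) d \<and>
     generates_topology X (\<lambda>x r. {y\<in>topspace X. d x y < r}) {r. 0 < r}}"

definition is_ultrametric ::
  "'a set \<Rightarrow> 'b set \<Rightarrow> ('b \<Rightarrow> 'b \<Rightarrow> bool) \<Rightarrow> 'b \<Rightarrow> ('a \<Rightarrow> 'a \<Rightarrow> 'b) \<Rightarrow> bool" where
  "is_ultrametric M S le bt e \<longleftrightarrow>
     (\<forall>x\<in>M. \<forall>y\<in>M. e x y \<in> S \<and> (e x y = bt \<longleftrightarrow> x = y) \<and> e x y = e y x) \<and>
     (\<forall>x\<in>M. \<forall>y\<in>M. \<forall>z\<in>M. le (e x y) (omax le (e x z) (e z y)))"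

definition Ult ::
  "'a topology \<Rightarrow> 'b set \<Rightarrow> ('b \<Rightarrow> 'b \<Rightarrow> bool) \<Rightarrow> 'b \<Rightarrow> ('a \<Rightarrow> 'a \<Rightarrow> 'b) set" where
  "Ult X S le bt = {e. is_ultrametric (topspace X) S le bt e \<and>
     generates_topology X (\<lambda>x r. {y\<in>topspace X. strict le (e x y) r}) (S - {bt})}"

definition unif_equiv_arc ::
  "'a topology \<Rightarrow> ('a \<Rightarrow> 'a \<Rightarrow> 'g::linordered_ab_group_add) \<Rightarrow> ('a \<Rightarrow> 'a \<Rightarrow> 'g set) \<Rightarrow> bool" where
  "unif_equiv_arc X d e \<longleftrightarrow>
     (\<forall>\<epsilon>\<in>ArcBot - {arc_bot_elem}. \<exists>\<delta>>0. \<forall>x\<in>topspace X. \<forall>y\<in>topspace X.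
        d x y < \<delta> \<longrightarrow> strict arc_le (e x y) \<epsilon>) \<and>
     (\<forall>\<epsilon>>0. \<exists>\<delta>\<in>ArcBot - {arc_bot_elem}. \<forall>x\<in>topspace X. \<forall>y\<in>topspace X.
        strict arc_le (e x y) \<delta> \<longrightarrow> d x y < \<epsilon>)"

end

theory Submission
  imports Defs
begin

text \<open>For u, v \<ge> 0 we have \<open>lam u \<le> lam v\<close> iff u \<le> n v for some n \<ge> 1. Since
  d(x,y) \<le> 2 max(d(x,z), d(z,y)), this makes \<open>lam \<circ> d\<close> an ultrametric. As
  \<chi>(Arc(G) with bottom) = \<kappa> is infinite, Arc(G) has no least element: every r > 0 admits
  some \<delta> > 0 with n \<delta> < r for all n. Then d(x,y) < \<delta> forces \<open>lam (d x y) < lam r\<close>, while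
  \<open>lam (d x y) < lam r\<close> forces d(x,y) < r. This is the uniform equivalence, and it
  identifies the two systems of balls, hence the topologies.\<close>

lemma gmul_add_left: "gmul (m + n) x = gmul m x + gmul n x"
  by (induction m) (auto simp: add.assoc)

lemma gmul_mult: "gmul (m * n) x = gmul m (gmul n x)"
  by (induction m) (simp_all add: gmul_add_left)

lemma gmul_mono: "x \<le> y \<Longrightarrow> gmul n x \<le> gmul n y"
  by (induction n) (auto intro: add_mono)

lemma gmul_zero [simp]: "gmul n (0::'g::linordered_ab_group_add) = 0"
  by (induction n) auto

text \<open>On positive elements this is the preorder whose quotient is Arc(G).\<close>
definition arch_dom :: "'g::linordered_ab_group_add \<Rightarrow> 'g \<Rightarrow> bool" where
  "arch_dom x y \<longleftrightarrow> (\<exists>n\<ge>1. x \<le> gmul n y)"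

lemma le_imp_arch_dom: "x \<le> y \<Longrightarrow> arch_dom x y"
  unfolding arch_dom_def by (intro exI[of _ 1]) simp

lemma arch_dom_refl: "arch_dom x x"
  by (simp add: le_imp_arch_dom)

lemma not_arch_dom_imp_less: "\<not> arch_dom x y \<Longrightarrow> y < x"
  using le_imp_arch_dom not_le by blast

lemma arch_dom_total: "arch_dom x y \<or> arch_dom y x"
  using linear[of x y] le_imp_arch_dom by blast

lemma arch_dom_trans:
  assumes "arch_dom x y" "arch_dom y z"
  shows "arch_dom x z"
proof -
  obtain n m where n: "n \<ge> 1" "x \<le> gmul n y" and m: "m \<ge> 1" "y \<le> gmul m z"
    using assms unfolding arch_dom_def by blast
  have "x \<le> gmul (n * m) z"
    using n(2) gmul_mono[OF m(2), of n] by (simp add: gmul_mult)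
  moreover have "n * m \<ge> 1"
    using n(1) m(1) by simp
  ultimately show ?thesis
    unfolding arch_dom_def by blast
qed

lemma arch_dom_zero_iff: "arch_dom x 0 \<longleftrightarrow> x \<le> 0"
  unfolding arch_dom_def using le_refl[of "1::nat"] by auto

lemma arch_dom_pos:
  assumes "arch_dom x y" "0 < x"
  shows "0 < y"
proof (rule ccontr)
  assume "\<not> 0 < y"
  then have "arch_dom y 0"
    by (simp add: le_imp_arch_dom)
  then have "arch_dom x 0"
    using assms(1) arch_dom_trans by blast
  then have "x \<le> 0"
    by (simp add: arch_dom_zero_iff)
  then show False
    using assms(2) by simp
qed

lemma arch_eqv_iff: "arch_eqv x y \<longleftrightarrow> 0 < x \<and> 0 < y \<and> arch_dom x y \<and> arch_dom y x"
  unfolding arch_eqv_def arch_dom_def by blast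

lemma arch_dom_max_of_le_add: "c \<le> a + b \<Longrightarrow> arch_dom c (max a b)"
proof -
  assume "c \<le> a + b"
  also have "a + b \<le> gmul 2 (max a b)"
    by (simp add: numeral_2_eq_2 add_mono)
  finally show "arch_dom c (max a b)"
    unfolding arch_dom_def by (intro exI[of _ 2]) simp
qed

lemma lam_zero [simp]: "lam 0 = arc_bot_elem"
  by (simp add: lam_def)

lemma lam_pos: "0 < v \<Longrightarrow> lam v = arc_class v"
  by (auto simp: lam_def gabs_def)

lemma arc_class_self: "0 < v \<Longrightarrow> v \<in> arc_class v"
  by (simp add: arc_class_def arch_eqv_iff arch_dom_refl)

lemma arc_class_ne_bot:
  assumes "0 < v"
  shows "arc_class v \<noteq> arc_bot_elem"
proof
  assume "arc_class v = arc_bot_elem"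
  then show False
    using assms arc_class_self[of v] by (simp add: arc_bot_elem_def)
qed

lemma lam_eq_bot_iff:
  assumes "0 \<le> v"
  shows "lam v = arc_bot_elem \<longleftrightarrow> v = 0"
proof (cases "v = 0")
  case False
  then have "0 < v"
    using assms by simp
  then show ?thesis
    by (simp add: lam_pos arc_class_ne_bot)
qed simp

lemma arc_class_eq_iff:
  assumes "0 < u" "0 < v"
  shows "arc_class u = arc_class v \<longleftrightarrow> arch_eqv u v"
proof
  assume "arc_class u = arc_class v"
  then have "v \<in> arc_class u"
    using arc_class_self[OF assms(2)] by simp
  then show "arch_eqv u v"
    by (simp add: arc_class_def)
next
  assume "arch_eqv u v"
  then have "arch_eqv u w \<longleftrightarrow> arch_eqv v w" for w
    unfolding arch_eqv_iff using arch_dom_trans by blast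
  then have "arch_eqv u = arch_eqv v"
    by (rule ext)
  then show "arc_class u = arc_class v"
    unfolding arc_class_def by simp
qed

lemma lam_eq_iff:
  assumes "0 \<le> u" "0 \<le> v"
  shows "lam u = lam v \<longleftrightarrow> arch_dom u v \<and> arch_dom v u"
proof (cases "0 < u \<and> 0 < v")
  case True
  then show ?thesis
    by (simp add: lam_pos arc_class_eq_iff arch_eqv_iff)
next
  case False
  then have "u = 0 \<or> v = 0"
    using assms by auto
  then have "lam u = lam v \<longleftrightarrow> u = 0 \<and> v = 0"
    using assms lam_eq_bot_iff by auto
  also have "\<dots> \<longleftrightarrow> arch_dom u v \<and> arch_dom v u"
    using \<open>u = 0 \<or> v = 0\<close> assms arch_dom_zero_iff le_imp_arch_dom by auto
  finally show ?thesis .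
qed

lemma arc_le_lam_iff:
  assumes "0 \<le> u" "0 \<le> v"
  shows "arc_le (lam u) (lam v) \<longleftrightarrow> arch_dom u v"
proof
  assume "arc_le (lam u) (lam v)"
  then consider (bot) "lam u = arc_bot_elem"
    | (classes) x y where "0 < x" "0 < y" "lam u = arc_class x" "lam v = arc_class y"
        "(\<forall>n\<ge>1. gmul n x < y) \<or> arch_eqv x y"
    unfolding arc_le_def by blast
  then show "arch_dom u v"
  proof cases
    case bot
    then have "u = 0"
      using assms(1) lam_eq_bot_iff by blast
    then show ?thesis
      using assms(2) le_imp_arch_dom by simp
  next
    case classes
    have "lam u = lam x" "lam y = lam v"
      using classes(1-4) by (simp_all add: lam_pos)
    then have "arch_dom u x" "arch_dom y v"
      using lam_eq_iff[OF assms(1) less_imp_le[OF classes(1)]]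
        lam_eq_iff[OF less_imp_le[OF classes(2)] assms(2)] by simp_all
    moreover have "arch_dom x y"
      using classes(5)
    proof
      assume "\<forall>n\<ge>1. gmul n x < y"
      then have "gmul 1 x < y"
        by blast
      then show ?thesis
        by (simp add: le_imp_arch_dom)
    next
      assume "arch_eqv x y"
      then show ?thesis
        by (simp add: arch_eqv_iff)
    qed
    ultimately show ?thesis
      using arch_dom_trans by blast
  qed
next
  assume uv: "arch_dom u v"
  show "arc_le (lam u) (lam v)"
  proof (cases "u = 0")
    case True
    then show ?thesis
      by (simp add: arc_le_def)
  next
    case False
    then have "0 < u"
      using assms(1) by simp
    then have pos: "0 < u" "0 < v"
      using arch_dom_pos[OF uv] by simp_all
    have "(\<forall>n\<ge>1. gmul n u < v) \<or> arch_dom v u"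
      unfolding arch_dom_def using not_less by blast
    then have "(\<forall>n\<ge>1. gmul n u < v) \<or> arch_eqv u v"
      using pos uv arch_eqv_iff by blast
    moreover have "lam u = arc_class u" "lam v = arc_class v"
      using pos by (simp_all add: lam_pos)
    ultimately show ?thesis
      unfolding arc_le_def using pos by blast
  qed
qed

lemma strict_arc_le_lam_iff:
  assumes "0 \<le> u" "0 \<le> v"
  shows "strict arc_le (lam u) (lam v) \<longleftrightarrow> \<not> arch_dom v u"
  unfolding strict_def arc_le_lam_iff[OF assms] lam_eq_iff[OF assms]
  using arch_dom_total by blast

lemma omax_lam:
  assumes "0 \<le> a" "0 \<le> b"
  shows "omax arc_le (lam a) (lam b) = lam (max a b)"
proof (cases "arch_dom a b")
  case True
  have "lam (max a b) = lam b"
  proof (cases "a \<le> b")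
    case False
    then have "arch_dom b a"
      by (simp add: le_imp_arch_dom)
    then show ?thesis
      using True lam_eq_iff[OF assms] False by (simp add: max_def)
  qed (simp add: max_def)
  then show ?thesis
    using True arc_le_lam_iff[OF assms] by (simp add: omax_def)
next
  case False
  then have "max a b = a"
    using not_arch_dom_imp_less by fastforce
  then show ?thesis
    using False arc_le_lam_iff[OF assms] by (simp add: omax_def)
qed

lemma lam_in_ArcBot: "0 \<le> v \<Longrightarrow> lam v \<in> ArcBot"
  by (auto simp: ArcBot_def lam_def gabs_def)

lemma ArcBot_minus_bot: "ArcBot - {arc_bot_elem} = lam ` {v. 0 < v}"
  by (auto simp: ArcBot_def lam_pos arc_class_ne_bot)

lemma chi_is_infinite_imp_no_least:
  fixes \<kappa> :: "'k rel"
  assumes chi: "chi_is S le bt \<kappa>" and inf: "Cinfinite \<kappa>" and m: "m \<in> S - {bt}"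
  shows "\<exists>t\<in>S - {bt}. \<not> le m t"
proof (rule ccontr)
  assume "\<not> ?thesis"
  then have least: "\<forall>t\<in>S - {bt}. le m t"
    by blast
  define r :: "'k rel" where "r = card_of {undefined}"
  have field: "Field r = {undefined}" and card: "Card_order r"
    unfolding r_def by (rule Field_card_of, rule card_of_Card_order)
  have less: "(r, \<kappa>) \<in> ordLess"
    using finite_ordLess_infinite[of r \<kappa>] field card inf
    by (simp add: card_order_on_well_order_on cinfinite_def)
  have "\<alpha> = \<beta>" if "(\<alpha>, \<beta>) \<in> r" for \<alpha> \<beta>
    using field FieldI1[OF that] FieldI2[OF that] by simp
  then have family: "dec_coinitial S le bt r (\<lambda>_. m)"
    unfolding dec_coinitial_def using m least field by auto
  have minimal: "\<forall>r'::'k rel. Card_order r' \<and> Field r' \<noteq> {} \<and> (r', \<kappa>) \<in> ordLess \<longrightarrow>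
      \<not> (\<exists>s. dec_coinitial S le bt r' s)"
    using chi unfolding chi_is_def by (elim conjE)
  have "\<not> (\<exists>s. dec_coinitial S le bt r s)"
    using minimal card field less by simp
  then show False
    using family by blast
qed

lemma chi_arc_infinite_imp_ex_smaller:
  assumes "chi_arc TYPE('g::linordered_ab_group_add) \<kappa>" "Cinfinite \<kappa>" "0 < (r::'g)"
  shows "\<exists>\<delta>>0. \<not> arch_dom r \<delta>"
proof -
  have "lam r \<in> ArcBot - {arc_bot_elem}"
    using assms(3) unfolding ArcBot_minus_bot by blast
  then obtain t where t: "t \<in> ArcBot - {arc_bot_elem}" "\<not> arc_le (lam r) t"
    using chi_is_infinite_imp_no_least[OF assms(1,2)] by blast
  then obtain \<delta> where \<delta>: "0 < \<delta>" "t = lam \<delta>"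
    unfolding ArcBot_minus_bot by blast
  then show ?thesis
    using t(2) arc_le_lam_iff[OF less_imp_le[OF assms(3)] less_imp_le[OF \<delta>(1)]] by blast
qed

lemma gmetric_lam_ultrametric:
  assumes "is_gmetric M d"
  shows "is_ultrametric M ArcBot arc_le arc_bot_elem (\<lambda>x y. lam (d x y))"
  unfolding is_ultrametric_def
proof (intro conjI ballI)
  fix x y
  assume xy: "x \<in> M" "y \<in> M"
  then have "0 \<le> d x y"
    using assms unfolding is_gmetric_def by blast
  then show "lam (d x y) \<in> ArcBot" "lam (d x y) = arc_bot_elem \<longleftrightarrow> x = y"
    using assms xy lam_in_ArcBot lam_eq_bot_iff unfolding is_gmetric_def by auto
  show "lam (d x y) = lam (d y x)"
    using assms xy unfolding is_gmetric_def by simp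
next
  fix x y z
  assume "x \<in> M" "y \<in> M" "z \<in> M"
  then have "0 \<le> d x y" "0 \<le> d x z" "0 \<le> d z y" "d x y \<le> d x z + d z y"
    using assms unfolding is_gmetric_def by blast+
  then show "arc_le (lam (d x y)) (omax arc_le (lam (d x z)) (lam (d z y)))"
    by (simp add: omax_lam arc_le_lam_iff arch_dom_max_of_le_add le_max_iff_disj)
qed

lemma unif_equiv_arc_lam:
  fixes d :: "'a \<Rightarrow> 'a \<Rightarrow> 'g::linordered_ab_group_add"
  assumes nonneg: "\<forall>x\<in>topspace X. \<forall>y\<in>topspace X. 0 \<le> d x y"
    and smaller: "\<forall>r>0. \<exists>\<delta>>0. \<not> arch_dom r (\<delta>::'g)"
  shows "unif_equiv_arc X d (\<lambda>x y. lam (d x y))"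
  unfolding unif_equiv_arc_def ArcBot_minus_bot
proof (intro conjI ballI allI impI)
  fix \<epsilon> :: "'g set"
  assume "\<epsilon> \<in> lam ` {v. 0 < v}"
  then obtain r where r: "0 < r" "\<epsilon> = lam r"
    by blast
  obtain \<delta> where \<delta>: "0 < \<delta>" "\<not> arch_dom r \<delta>"
    using smaller r(1) by blast
  have "strict arc_le (lam u) (lam r)" if "0 \<le> u" "u < \<delta>" for u
  proof -
    have "\<not> arch_dom r u"
      using \<delta>(2) arch_dom_trans[of r u \<delta>] le_imp_arch_dom[of u \<delta>] that(2) by auto
    then show ?thesis
      using strict_arc_le_lam_iff[OF that(1) less_imp_le[OF r(1)]] by blast
  qed
  then show "\<exists>\<delta>>0. \<forall>x\<in>topspace X. \<forall>y\<in>topspace X. d x y < \<delta> \<longrightarrow> strict arc_le (lam (d x y)) \<epsilon>"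
    using \<delta>(1) r(2) nonneg by blast
next
  fix \<epsilon> :: 'g
  assume "0 < \<epsilon>"
  then have "d x y < \<epsilon>"
    if "x \<in> topspace X" "y \<in> topspace X" "strict arc_le (lam (d x y)) (lam \<epsilon>)" for x y
    using that(3) nonneg that(1,2) strict_arc_le_lam_iff[of "d x y" \<epsilon>] not_arch_dom_imp_less
    by auto
  then show "\<exists>\<delta>\<in>lam ` {v. 0 < v}. \<forall>x\<in>topspace X. \<forall>y\<in>topspace X.
      strict arc_le (lam (d x y)) \<delta> \<longrightarrow> d x y < \<epsilon>"
    using \<open>0 < \<epsilon>\<close> by blast
qed

lemma generates_topology_refine:
  assumes "generates_topology X B R"
    and "\<forall>x\<in>topspace X. \<forall>r\<in>R. \<exists>r'\<in>R'. B' x r' \<subseteq> B x r"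
    and "\<forall>x\<in>topspace X. \<forall>r'\<in>R'. \<exists>r\<in>R. B x r \<subseteq> B' x r'"
  shows "generates_topology X B' R'"
  unfolding generates_topology_def
proof
  fix U
  have same: "(\<exists>r\<in>R. B x r \<subseteq> U) \<longleftrightarrow> (\<exists>r'\<in>R'. B' x r' \<subseteq> U)"
    if "U \<subseteq> topspace X" "x \<in> U" for x
  proof -
    have "x \<in> topspace X"
      using that by blast
    then show ?thesis
      using assms(2,3) by (meson order_trans)
  qed
  have "openin X U \<longleftrightarrow> U \<subseteq> topspace X \<and> (\<forall>x\<in>U. \<exists>r\<in>R. B x r \<subseteq> U)"
    using assms(1) unfolding generates_topology_def by (rule spec)
  then show "openin X U \<longleftrightarrow> U \<subseteq> topspace X \<and> (\<forall>x\<in>U. \<exists>r'\<in>R'. B' x r' \<subseteq> U)"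
    using same by blast
qed

lemma generates_topology_unif_equiv_arc:
  fixes d :: "'a \<Rightarrow> 'a \<Rightarrow> 'g::linordered_ab_group_add"
  assumes unif: "unif_equiv_arc X d e"
    and balls: "generates_topology X (\<lambda>x r. {y\<in>topspace X. d x y < r}) {r. 0 < r}"
  shows "generates_topology X (\<lambda>x r. {y\<in>topspace X. strict arc_le (e x y) r})
           (ArcBot - {arc_bot_elem})"
  using balls
proof (rule generates_topology_refine; intro ballI)
  fix x and r :: 'g
  assume x: "x \<in> topspace X" and "r \<in> {r. 0 < r}"
  moreover have "\<forall>\<epsilon>>0. \<exists>\<delta>\<in>ArcBot - {arc_bot_elem}. \<forall>x\<in>topspace X. \<forall>y\<in>topspace X.
      strict arc_le (e x y) \<delta> \<longrightarrow> d x y < \<epsilon>"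
    using unif unfolding unif_equiv_arc_def by (rule conjunct2)
  ultimately obtain \<delta> where "\<delta> \<in> ArcBot - {arc_bot_elem}"
    and "\<forall>x\<in>topspace X. \<forall>y\<in>topspace X. strict arc_le (e x y) \<delta> \<longrightarrow> d x y < r"
    by blast
  then show "\<exists>r'\<in>ArcBot - {arc_bot_elem}.
      {y\<in>topspace X. strict arc_le (e x y) r'} \<subseteq> {y\<in>topspace X. d x y < r}"
    using x by blast
next
  fix x and r' :: "'g set"
  assume x: "x \<in> topspace X" and "r' \<in> ArcBot - {arc_bot_elem}"
  moreover have "\<forall>\<epsilon>\<in>ArcBot - {arc_bot_elem}. \<exists>\<delta>>0. \<forall>x\<in>topspace X. \<forall>y\<in>topspace X.
      d x y < \<delta> \<longrightarrow> strict arc_le (e x y) \<epsilon>"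
    using unif unfolding unif_equiv_arc_def by (rule conjunct1)
  ultimately obtain \<delta> where "0 < \<delta>"
    and "\<forall>x\<in>topspace X. \<forall>y\<in>topspace X. d x y < \<delta> \<longrightarrow> strict arc_le (e x y) r'"
    by blast
  then show "\<exists>r\<in>{r. 0 < r}.
      {y\<in>topspace X. d x y < r} \<subseteq> {y\<in>topspace X. strict arc_le (e x y) r'}"
    using x by blast
qed

theorem lemma2p35:
  fixes X :: "'a topology"
    and \<kappa> :: "'k rel"
    and d :: "'a \<Rightarrow> 'a \<Rightarrow> 'g::linordered_ab_group_add"
  assumes gauge: "\<exists>(\<mu>::'k2 rel) (e::'a \<Rightarrow> 'a \<Rightarrow> 'h::linordered_ab_group_add).
                    chi_arc TYPE('h) \<mu> \<and> \<not> finite (Field \<mu>) \<and> e \<in> Met X"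
    and regular: "Cinfinite \<kappa>" "regularCard \<kappa>"
    and inMG: "\<exists>e::'a \<Rightarrow> 'a \<Rightarrow> 'm::linordered_ab_group_add.
                 chi_arc TYPE('m) \<kappa> \<and> e \<in> Met X"
    and G: "chi_arc TYPE('g) \<kappa>"
    and d: "d \<in> Met X"
  shows "(\<lambda>x y. lam (d x y)) \<in> Ult X ArcBot arc_le arc_bot_elem
         \<and> unif_equiv_arc X d (\<lambda>x y. lam (d x y))"
proof -
  have metric: "is_gmetric (topspace X) d"
    and balls: "generates_topology X (\<lambda>x r. {y\<in>topspace X. d x y < r}) {r. 0 < r}"
    using d unfolding Met_def by auto
  have nonneg: "\<forall>x\<in>topspace X. \<forall>y\<in>topspace X. 0 \<le> d x y"
    using metric unfolding is_gmetric_def by blast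
  have "\<forall>r>0. \<exists>\<delta>>0. \<not> arch_dom r (\<delta>::'g)"
    using chi_arc_infinite_imp_ex_smaller[OF G regular(1)] by blast
  with nonneg have unif: "unif_equiv_arc X d (\<lambda>x y. lam (d x y))"
    by (rule unif_equiv_arc_lam)
  have "(\<lambda>x y. lam (d x y)) \<in> Ult X ArcBot arc_le arc_bot_elem"
    unfolding Ult_def mem_Collect_eq
    using gmetric_lam_ultrametric[OF metric] generates_topology_unif_equiv_arc[OF unif balls]
    by (rule conjI)
  then show ?thesis
    using unif by (rule conjI)
qed

end
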